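(* Let $R\in[0,\tfrac34]$. Suppose the algorithm described in the context is run with penalty functions $f_j:[0,1]\to[0,1]$ ($j\in S$, possibly chosen depending on the advice $A$) that are continuous, nondecreasing, and satisfy $$1-\frac{1-R}{x}\;\le\; f_j(x)\;\le\;\frac{1-R}{1-x}\qquad\text{for all }x\in(0,1)$$ (and $f_j(1)\ge R$). Then for every instance $G$ and every advice $A$, $\mathsf{ALG}(G,A)\ge R\cdot \mathsf{OPT}(G)$; i.e. the algorithm is $R$-robust.
   Context: Setting (two-stage vertex-weighted bipartite matching with advice). A bipartite graph $G=(D,S,E)$ has offline vertices $S$, each $j\in S$ carrying a weight $w_j\ge 0$, and online vertices $D=D_1\sqcup D_2$ arriving in two stages. $E_1$ (resp. $E_2$) denotes the set of edges between $D_1$ (resp. $D_2$) and $S$. The advice is a matching $A\subseteq E_1$. $\mathsf{OPT}(G)$ denotes the maximum of $\sum_{j\in S\text{ covered by }M}w_j$ over all matchings $M\subseteq E$. Algorithm (parameters: functions $f_j:[0,1]\to[0,1]$, $j\in S$). First stage: after $D_1,E_1,A$ are revealed, let $\bar x$ be an optimal solution of (P1): maximize $\sum_{j\in S} w_j\bigl(x_j-\int_0^{x_j}f_j(t)\,dt\bigr)$ subject to $x_i:=\sum_{j:(i,j)\in E_1}x_{ij}\le 1$ ($i\in D_1$), $x_j:=\sum_{i:(i,j)\in E_1}x_{ij}\le 1$ ($j\in S$), $x_{ij}\ge0$. Second stage: after $D_2,E_2$ are revealed, let $\bar y$ be an optimal solution of (P2): maximize $\sum_{j\in S}w_jy_j$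 subject to $y_i:=\sum_{j:(i,j)\in E_2}y_{ij}\le 1$ ($i\in D_2$), $y_j:=\sum_{i:(i,j)\in E_2}y_{ij}\le 1-\bar x_j$ ($j\in S$), $y_{ij}\ge 0$. The algorithm's value is $\mathsf{ALG}(G,A)=\sum_{j\in S}w_j(\bar x_j+\bar y_j)$. *)

theory Defs
  imports "HOL-Analysis.Analysis"
begin

text \<open>Bipartite graphs: online vertices of type 'd, offline vertices of type 's;
  an edge is a pair (i, j) with i online and j offline.\<close>

definition is_matching :: "('d \<times> 's) set \<Rightarrow> bool" where
  "is_matching M \<longleftrightarrow>
     (\<forall>e1\<in>M. \<forall>e2\<in>M. e1 \<noteq> e2 \<longrightarrow> fst e1 \<noteq> fst e2 \<and> snd e1 \<noteq> snd e2)"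

definition OPT :: "('s \<Rightarrow> real) \<Rightarrow> ('d \<times> 's) set \<Rightarrow> real" where
  "OPT w E = Max {(\<Sum>j\<in>snd ` M. w j) | M. M \<subseteq> E \<and> is_matching M}"

definition load_on :: "('d \<times> 's) set \<Rightarrow> ('d \<times> 's \<Rightarrow> real) \<Rightarrow> 'd \<Rightarrow> real" where
  "load_on E x i = (\<Sum>e\<in>{e\<in>E. fst e = i}. x e)"

definition load_off :: "('d \<times> 's) set \<Rightarrow> ('d \<times> 's \<Rightarrow> real) \<Rightarrow> 's \<Rightarrow> real" where
  "load_off E x j = (\<Sum>e\<in>{e\<in>E. snd e = j}. x e)"

definition feasible1 :: "'d set \<Rightarrow> 's set \<Rightarrow> ('d \<times> 's) set \<Rightarrow> ('d \<times> 's \<Rightarrow> real) \<Rightarrow> bool" where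
  "feasible1 D1 S E1 x \<longleftrightarrow>
     (\<forall>e\<in>E1. 0 \<le> x e) \<and>
     (\<forall>i\<in>D1. load_on E1 x i \<le> 1) \<and>
     (\<forall>j\<in>S. load_off E1 x j \<le> 1)"

definition obj1 :: "'s set \<Rightarrow> ('s \<Rightarrow> real) \<Rightarrow> ('s \<Rightarrow> real \<Rightarrow> real) \<Rightarrow> ('d \<times> 's) set
    \<Rightarrow> ('d \<times> 's \<Rightarrow> real) \<Rightarrow> real" where
  "obj1 S w f E1 x =
     (\<Sum>j\<in>S. w j * (load_off E1 x j - integral {0..load_off E1 x j} (f j)))"

definition optimal1 :: "'d set \<Rightarrow> 's set \<Rightarrow> ('s \<Rightarrow> real) \<Rightarrow> ('s \<Rightarrow> real \<Rightarrow> real)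
    \<Rightarrow> ('d \<times> 's) set \<Rightarrow> ('d \<times> 's \<Rightarrow> real) \<Rightarrow> bool" where
  "optimal1 D1 S w f E1 x \<longleftrightarrow>
     feasible1 D1 S E1 x \<and>
     (\<forall>x'. feasible1 D1 S E1 x' \<longrightarrow> obj1 S w f E1 x' \<le> obj1 S w f E1 x)"

definition feasible2 :: "'d set \<Rightarrow> 's set \<Rightarrow> ('d \<times> 's) set \<Rightarrow> ('s \<Rightarrow> real)
    \<Rightarrow> ('d \<times> 's \<Rightarrow> real) \<Rightarrow> bool" where
  "feasible2 D2 S E2 xs y \<longleftrightarrow>
     (\<forall>e\<in>E2. 0 \<le> y e) \<and>
     (\<forall>i\<in>D2. load_on E2 y i \<le> 1) \<and>
     (\<forall>j\<in>S. load_off E2 y j \<le> 1 - xs j)"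

definition obj2 :: "'s set \<Rightarrow> ('s \<Rightarrow> real) \<Rightarrow> ('d \<times> 's) set \<Rightarrow> ('d \<times> 's \<Rightarrow> real) \<Rightarrow> real" where
  "obj2 S w E2 y = (\<Sum>j\<in>S. w j * load_off E2 y j)"

definition optimal2 :: "'d set \<Rightarrow> 's set \<Rightarrow> ('s \<Rightarrow> real) \<Rightarrow> ('d \<times> 's) set \<Rightarrow> ('s \<Rightarrow> real)
    \<Rightarrow> ('d \<times> 's \<Rightarrow> real) \<Rightarrow> bool" where
  "optimal2 D2 S w E2 xs y \<longleftrightarrow>
     feasible2 D2 S E2 xs y \<and>
     (\<forall>y'. feasible2 D2 S E2 xs y' \<longrightarrow> obj2 S w E2 y' \<le> obj2 S w E2 y)"

definition ALG :: "'s set \<Rightarrow> ('s \<Rightarrow> real) \<Rightarrow> ('d \<times> 's) set \<Rightarrow> ('d \<times> 's) set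
    \<Rightarrow> ('d \<times> 's \<Rightarrow> real) \<Rightarrow> ('d \<times> 's \<Rightarrow> real) \<Rightarrow> real" where
  "ALG S w E1 E2 x y = (\<Sum>j\<in>S. w j * (load_off E1 x j + load_off E2 y j))"

end

theory Submission
  imports Defs
begin

text \<open>Fix an optimal matching and split it into its first-stage part in \<open>E1\<close> and its
  second-stage part in \<open>E2\<close>; they cover disjoint sets \<open>J1\<close>, \<open>J2\<close> of offline vertices.
  Routing \<open>1 - x\<^sub>j\<close> along each second-stage edge is feasible for (P2), so the second stage
  earns at least \<open>\<Sum>j\<in>J2. w\<^sub>j (1 - x\<^sub>j)\<close>. The objective of (P1) is concave, so optimality
  of \<open>x\<close> yields the first-order condition in the direction of the indicator of the
  first-stage part: \<open>\<Sum>j\<in>J1. w\<^sub>j (1 - f\<^sub>j(x\<^sub>j)) \<le> \<Sum>j. w\<^sub>j (1 - f\<^sub>j(x\<^sub>j)) x\<^sub>j\<close>.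
  Writing \<open>w\<^sub>j x\<^sub>j = w\<^sub>j (1 - f\<^sub>j(x\<^sub>j)) x\<^sub>j + w\<^sub>j x\<^sub>j f\<^sub>j(x\<^sub>j)\<close>, every \<open>j \<in> J1\<close> is then charged
  \<open>(1 - f\<^sub>j(x\<^sub>j)) + x\<^sub>j f\<^sub>j(x\<^sub>j) \<ge> R\<close> and every \<open>j \<in> J2\<close> is charged \<open>x\<^sub>j f\<^sub>j(x\<^sub>j) + (1 - x\<^sub>j) \<ge> R\<close>.
  These two inequalities are exactly the upper and the lower bound on \<open>f\<^sub>j\<close>.\<close>

lemma is_matching_subset: "is_matching M \<Longrightarrow> M' \<subseteq> M \<Longrightarrow> is_matching M'"
  unfolding is_matching_def by blast

lemma is_matching_fst_eq:
  "is_matching M \<Longrightarrow> e \<in> M \<Longrightarrow> e' \<in> M \<Longrightarrow> fst e = fst e' \<Longrightarrow> e = e'"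
  unfolding is_matching_def by blast

lemma is_matching_snd_eq:
  "is_matching M \<Longrightarrow> e \<in> M \<Longrightarrow> e' \<in> M \<Longrightarrow> snd e = snd e' \<Longrightarrow> e = e'"
  unfolding is_matching_def by blast

lemma OPT_attained:
  assumes "finite E"
  obtains M where "M \<subseteq> E" "is_matching M" "OPT w E = (\<Sum>j\<in>snd ` M. w j)"
proof -
  let ?val = "\<lambda>M. \<Sum>j\<in>snd ` M. w j"
  have vals: "{?val M | M. M \<subseteq> E \<and> is_matching M} = ?val ` {M. M \<subseteq> E \<and> is_matching M}"
    by blast
  have "finite {M. M \<subseteq> E \<and> is_matching M}"
    using assms by simp
  moreover have "{} \<in> {M. M \<subseteq> E \<and> is_matching M}"
    unfolding is_matching_def by simp
  ultimately have "OPT w E \<in> ?val ` {M. M \<subseteq> E \<and> is_matching M}"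
    unfolding OPT_def vals by (intro Max_in) auto
  then show thesis using that by blast
qed

lemma matching_split_stages:
  assumes M: "is_matching M" "M \<subseteq> E1 \<union> E2"
    and E: "E1 \<subseteq> D1 \<times> S" "E2 \<subseteq> D2 \<times> S" "D1 \<inter> D2 = {}"
  shows "snd ` (M \<inter> E1) \<subseteq> S" "snd ` (M \<inter> E2) \<subseteq> S"
    "snd ` (M \<inter> E1) \<inter> snd ` (M \<inter> E2) = {}"
    "snd ` M = snd ` (M \<inter> E1) \<union> snd ` (M \<inter> E2)"
proof -
  have "fst ` E1 \<inter> fst ` E2 = {}"
    using E by fastforce
  then show "snd ` (M \<inter> E1) \<inter> snd ` (M \<inter> E2) = {}"
    using is_matching_snd_eq[OF M(1)] by fastforce
qed (use M(2) E in auto)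

definition matching_flow :: "('d \<times> 's) set \<Rightarrow> ('s \<Rightarrow> real) \<Rightarrow> 'd \<times> 's \<Rightarrow> real" where
  "matching_flow M c e = (if e \<in> M then c (snd e) else 0)"

lemma sum_matching_flow:
  assumes "finite E" "M \<subseteq> E"
  shows "(\<Sum>e\<in>{e\<in>E. P e}. matching_flow M c e) = (\<Sum>e\<in>{e\<in>M. P e}. c (snd e))"
proof -
  have "(\<Sum>e\<in>{e\<in>E. P e}. matching_flow M c e) = (\<Sum>e\<in>{e\<in>E. P e} \<inter> M. c (snd e))"
    unfolding matching_flow_def by (rule sum.inter_restrict[symmetric]) (simp add: assms(1))
  also have "\<dots> = (\<Sum>e\<in>{e\<in>M. P e}. c (snd e))"
    using assms(2) by (intro sum.cong) auto
  finally show ?thesis .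
qed

lemma load_off_matching_flow:
  assumes "finite E" "M \<subseteq> E" "is_matching M"
  shows "load_off E (matching_flow M c) j = (if j \<in> snd ` M then c j else 0)"
proof -
  have "load_off E (matching_flow M c) j = (\<Sum>e\<in>{e\<in>M. snd e = j}. c (snd e))"
    unfolding load_off_def using assms(1,2) by (rule sum_matching_flow)
  also have "\<dots> = (if j \<in> snd ` M then c j else 0)"
  proof (cases "j \<in> snd ` M")
    case True
    then obtain e0 where "e0 \<in> M" "snd e0 = j" by auto
    then have single: "{e\<in>M. snd e = j} = {e0}"
      using is_matching_snd_eq[OF assms(3)] by blast
    show ?thesis unfolding single using True \<open>snd e0 = j\<close> by simp
  next
    case False
    then have none: "{e\<in>M. snd e = j} = {}" by force
    show ?thesis unfolding none using False by simp
  qed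
  finally show ?thesis .
qed

lemma load_on_matching_flow_le:
  assumes "finite E" "M \<subseteq> E" "is_matching M" "\<forall>j\<in>snd ` M. c j \<le> 1"
  shows "load_on E (matching_flow M c) i \<le> 1"
proof -
  have "load_on E (matching_flow M c) i = (\<Sum>e\<in>{e\<in>M. fst e = i}. c (snd e))"
    unfolding load_on_def using assms(1,2) by (rule sum_matching_flow)
  also have "\<dots> \<le> 1"
  proof (cases "\<exists>e\<in>M. fst e = i")
    case True
    then obtain e0 where "e0 \<in> M" "fst e0 = i" by auto
    then have single: "{e\<in>M. fst e = i} = {e0}"
      using is_matching_fst_eq[OF assms(3)] by blast
    show ?thesis unfolding single using assms(4) \<open>e0 \<in> M\<close> by simp
  next
    case False
    then have none: "{e\<in>M. fst e = i} = {}" by blast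
    show ?thesis unfolding none by simp
  qed
  finally show ?thesis .
qed

lemma load_on_lincomb:
  "load_on E (\<lambda>e. a * x e + b * y e) i = a * load_on E x i + b * load_on E y i"
  unfolding load_on_def by (simp add: sum.distrib sum_distrib_left)

lemma load_off_lincomb:
  "load_off E (\<lambda>e. a * x e + b * y e) j = a * load_off E x j + b * load_off E y j"
  unfolding load_off_def by (simp add: sum.distrib sum_distrib_left)

lemma feasible1_load_off:
  assumes "feasible1 D S E x" "j \<in> S"
  shows "load_off E x j \<in> {0..1}"
  using assms unfolding feasible1_def load_off_def by (auto intro: sum_nonneg)

lemma feasible1_convex:
  assumes "feasible1 D S E x" "feasible1 D S E x'" "t \<in> {0..1}"
  shows "feasible1 D S E (\<lambda>e. (1 - t) * x e + t * x' e)"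
  using assms unfolding feasible1_def load_on_lincomb load_off_lincomb
  by (auto intro!: convex_bound_le)

lemma feasible1_matching_flow:
  assumes "finite E" "M \<subseteq> E" "is_matching M"
  shows "feasible1 D S E (matching_flow M (\<lambda>_. 1))"
  unfolding feasible1_def
  using load_on_matching_flow_le[OF assms] load_off_matching_flow[OF assms]
  by (auto simp: matching_flow_def)

lemma integral_increment_le_of_mono:
  fixes f :: "real \<Rightarrow> real"
  assumes mono: "mono_on {0..1} f" and int: "f integrable_on {0..1}"
    and u: "u \<in> {0..1}" and v: "v \<in> {0..1}"
  shows "integral {0..u} f - integral {0..v} f \<le> (u - v) * f u"
proof -
  have int_sub: "f integrable_on {a..b}" if "0 \<le> a" "b \<le> 1" for a b
    using integrable_on_subinterval[OF int] that by auto
  have f_le: "f t \<le> f u" if "t \<in> {0..u}" for t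
    using mono u that unfolding mono_on_def by auto
  have f_ge: "f u \<le> f t" if "t \<in> {u..1}" for t
    using mono u that unfolding mono_on_def by auto
  show ?thesis
  proof (cases "v \<le> u")
    case True
    have "integral {0..v} f + integral {v..u} f = integral {0..u} f"
      using True u v int_sub[of 0 u] by (intro Henstock_Kurzweil_Integration.integral_combine) auto
    moreover have "integral {v..u} f \<le> integral {v..u} (\<lambda>_. f u)"
      using int_sub[of v u] u v f_le by (intro integral_le) auto
    ultimately show ?thesis using True by simp
  next
    case False
    have "integral {0..u} f + integral {u..v} f = integral {0..v} f"
      using False u v int_sub[of 0 v] by (intro Henstock_Kurzweil_Integration.integral_combine) auto
    moreover have "integral {u..v} (\<lambda>_. f u) \<le> integral {u..v} f"
      using int_sub[of u v] u v f_ge by (intro integral_le) auto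
    ultimately show ?thesis using False by (simp add: algebra_simps)
  qed
qed

lemma obj1_increment_ge:
  assumes w: "\<forall>j\<in>S. 0 \<le> w j"
    and f_mono: "\<forall>j\<in>S. mono_on {0..1} (f j)"
    and f_cont: "\<forall>j\<in>S. continuous_on {0..1} (f j)"
    and x: "\<forall>j\<in>S. load_off E x j \<in> {0..1}" and x': "\<forall>j\<in>S. load_off E x' j \<in> {0..1}"
  shows "(\<Sum>j\<in>S. w j * (load_off E x' j - load_off E x j) * (1 - f j (load_off E x' j)))
           \<le> obj1 S w f E x' - obj1 S w f E x"
  unfolding obj1_def sum_subtractf[symmetric]
proof (rule sum_mono)
  fix j assume j: "j \<in> S"
  let ?u = "load_off E x' j" and ?v = "load_off E x j"
  have "integral {0..?u} (f j) - integral {0..?v} (f j) \<le> (?u - ?v) * f j ?u"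
    using j f_mono f_cont x x' by (intro integral_increment_le_of_mono integrable_continuous_real) auto
  then have "(?u - ?v) * (1 - f j ?u) \<le> (?u - integral {0..?u} (f j)) - (?v - integral {0..?v} (f j))"
    by (simp add: algebra_simps)
  then show "w j * (?u - ?v) * (1 - f j ?u)
      \<le> w j * (?u - integral {0..?u} (f j)) - w j * (?v - integral {0..?v} (f j))"
    using w j by (auto simp: mult.assoc right_diff_distrib[symmetric] intro: mult_left_mono)
qed

lemma interpolate_in_unit_interval:
  fixes a b t :: real
  assumes "a \<in> {0..1}" "b \<in> {0..1}" "t \<in> {0..1}"
  shows "a + t * (b - a) \<in> {0..1}"
proof -
  have "a + t * (b - a) = (1 - t) * a + t * b" by (simp add: algebra_simps)
  then show ?thesis
    using convex_bound_le[of a 1 b "1 - t" t] assms by auto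
qed

lemma continuous_on_nonpos_left_endpoint:
  fixes h :: "real \<Rightarrow> real"
  assumes "continuous_on {0..1} h" "\<And>t. t \<in> {0<..1} \<Longrightarrow> h t \<le> 0"
  shows "h 0 \<le> 0"
proof -
  have "(h \<longlongrightarrow> h 0) (at 0 within {0..1})"
    using assms(1) unfolding continuous_on_def by simp
  moreover have "\<forall>\<^sub>F t in at 0 within {0..1}. h t \<le> 0"
    unfolding eventually_at_filter using assms(2) by auto
  ultimately show ?thesis
    by (intro tendsto_upperbound) (auto simp: trivial_limit_within)
qed

lemma optimal1_first_order:
  assumes opt: "optimal1 D S w f E x" and feas': "feasible1 D S E x'"
    and w: "\<forall>j\<in>S. 0 \<le> w j"
    and f_mono: "\<forall>j\<in>S. mono_on {0..1} (f j)"
    and f_cont: "\<forall>j\<in>S. continuous_on {0..1} (f j)"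
  shows "(\<Sum>j\<in>S. w j * (load_off E x' j - load_off E x j) * (1 - f j (load_off E x j))) \<le> 0"
proof -
  define u where "u = load_off E x"
  define v where "v = load_off E x'"
  define xt where "xt = (\<lambda>t e. (1 - t) * x e + t * x' e)"
  \<comment> \<open>By concavity \<open>t * h t\<close> is a lower bound for the gain of the objective from \<open>x\<close> to
      \<open>xt t\<close>, so optimality forces \<open>h t \<le> 0\<close> for \<open>t > 0\<close>; the claim is the limit \<open>h 0 \<le> 0\<close>.\<close>
  define h where "h = (\<lambda>t. \<Sum>j\<in>S. w j * (v j - u j) * (1 - f j (u j + t * (v j - u j))))"
  have feas: "feasible1 D S E x" using opt unfolding optimal1_def by simp
  have u01: "u j \<in> {0..1}" and v01: "v j \<in> {0..1}" if "j \<in> S" for j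
    using feas feas' that unfolding u_def v_def by (auto dest: feasible1_load_off)
  have xt_load: "load_off E (xt t) j = u j + t * (v j - u j)" for t j
    unfolding xt_def load_off_lincomb u_def v_def by (simp add: algebra_simps)
  have path01: "u j + t * (v j - u j) \<in> {0..1}" if "j \<in> S" "t \<in> {0..1}" for j t
    using interpolate_in_unit_interval u01 v01 that by blast
  have h_nonpos: "h t \<le> 0" if t: "0 < t" "t \<le> 1" for t
  proof -
    have feas_t: "feasible1 D S E (xt t)"
      unfolding xt_def using feas feas' t by (intro feasible1_convex) auto
    have "t * h t = (\<Sum>j\<in>S. w j * (load_off E (xt t) j - u j) * (1 - f j (load_off E (xt t) j)))"
      unfolding h_def xt_load sum_distrib_left by (intro sum.cong) auto
    also have "\<dots> \<le> obj1 S w f E (xt t) - obj1 S w f E x"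
      unfolding u_def using w f_mono f_cont feas feas_t
      by (intro obj1_increment_ge) (auto dest: feasible1_load_off)
    also have "\<dots> \<le> 0"
      using opt feas_t unfolding optimal1_def by simp
    finally show ?thesis using t by (simp add: mult_le_0_iff)
  qed
  have "continuous_on {0..1} (\<lambda>t. f j (u j + t * (v j - u j)))" if "j \<in> S" for j
  proof (rule continuous_on_compose2[of "{0..1}" "f j"])
    show "continuous_on {0..1} (\<lambda>t. u j + t * (v j - u j))"
      by (intro continuous_intros)
  qed (use f_cont path01 that in auto)
  then have "continuous_on {0..1} h"
    unfolding h_def by (intro continuous_on_sum continuous_on_mult_left continuous_on_diff continuous_on_const)
  then have "h 0 \<le> 0"
    using h_nonpos by (rule continuous_on_nonpos_left_endpoint) auto
  then show ?thesis unfolding h_def u_def v_def by simp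
qed

lemma optimal1_matching_bound:
  assumes opt: "optimal1 D S w f E x" and fin: "finite S" "finite E"
    and M: "M \<subseteq> E" "is_matching M" "snd ` M \<subseteq> S"
    and w: "\<forall>j\<in>S. 0 \<le> w j"
    and f_mono: "\<forall>j\<in>S. mono_on {0..1} (f j)"
    and f_cont: "\<forall>j\<in>S. continuous_on {0..1} (f j)"
  shows "(\<Sum>j\<in>snd ` M. w j * (1 - f j (load_off E x j)))
           \<le> (\<Sum>j\<in>S. w j * (1 - f j (load_off E x j)) * load_off E x j)"
proof -
  let ?u = "load_off E x" and ?x' = "matching_flow M (\<lambda>_. 1)"
  have "(\<Sum>j\<in>S. w j * (load_off E ?x' j - ?u j) * (1 - f j (?u j))) \<le> 0"
    using optimal1_first_order[OF opt feasible1_matching_flow[OF fin(2) M(1,2)]] w f_mono f_cont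
    by blast
  moreover have "(\<Sum>j\<in>S. w j * (load_off E ?x' j - ?u j) * (1 - f j (?u j)))
      = (\<Sum>j\<in>S. if j \<in> snd ` M then w j * (1 - f j (?u j)) else 0)
        - (\<Sum>j\<in>S. w j * (1 - f j (?u j)) * ?u j)"
    unfolding load_off_matching_flow[OF fin(2) M(1,2)] sum_subtractf[symmetric]
    by (intro sum.cong) (auto simp: algebra_simps)
  moreover have "(\<Sum>j\<in>S. if j \<in> snd ` M then w j * (1 - f j (?u j)) else 0)
      = (\<Sum>j\<in>snd ` M. w j * (1 - f j (?u j)))"
    using fin(1) M(3) by (simp add: sum.If_cases Int_absorb1)
  ultimately show ?thesis by simp
qed

lemma optimal2_matching_bound:
  assumes opt: "optimal2 D S w E xs y" and fin: "finite S" "finite E"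
    and M: "M \<subseteq> E" "is_matching M" "snd ` M \<subseteq> S"
    and xs: "\<forall>j\<in>S. xs j \<in> {0..1}"
  shows "(\<Sum>j\<in>snd ` M. w j * (1 - xs j)) \<le> obj2 S w E y"
proof -
  let ?y' = "matching_flow M (\<lambda>j. 1 - xs j)"
  have load: "load_off E ?y' j = (if j \<in> snd ` M then 1 - xs j else 0)" for j
    by (rule load_off_matching_flow[OF fin(2) M(1,2)])
  have "feasible2 D S E xs ?y'"
    unfolding feasible2_def load
    using M(3) xs load_on_matching_flow_le[OF fin(2) M(1,2)]
    by (auto simp: matching_flow_def subset_iff)
  then have "obj2 S w E ?y' \<le> obj2 S w E y"
    using opt unfolding optimal2_def by blast
  moreover have "obj2 S w E ?y' = (\<Sum>j\<in>snd ` M. w j * (1 - xs j))"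
    unfolding obj2_def load using fin(1) M(3)
    by (simp add: if_distrib sum.If_cases Int_absorb1 cong: if_cong)
  ultimately show ?thesis by simp
qed

lemma one_minus_mul_penalty_le:
  fixes g :: "real \<Rightarrow> real"
  assumes R: "R \<le> 1" and mono: "mono_on {0..1} g"
    and upper: "\<forall>t\<in>{0<..<1}. g t \<le> (1 - R) / (1 - t)"
    and x: "x \<in> {0..1}"
  shows "(1 - x) * g x \<le> 1 - R"
proof -
  have bound: "(1 - t) * g t \<le> 1 - R" if "t \<in> {0<..<1}" for t
    using upper that by (auto simp: field_simps)
  consider "x = 0" | "x = 1" | "x \<in> {0<..<1}" using x by fastforce
  then show ?thesis
  proof cases
    case 1
    \<comment> \<open>At \<open>0\<close> the upper bound is only available in the limit, through monotonicity.\<close>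
    have "((\<lambda>t. (1 - t) * g 0) \<longlongrightarrow> (1 - 0) * g 0) (at_right 0)"
      by (intro tendsto_intros)
    moreover have "\<forall>\<^sub>F t in at_right 0. (1 - t) * g 0 \<le> 1 - R"
    proof (rule eventually_mono[OF eventually_at_right_real[of 0 1]])
      fix t :: real assume t: "t \<in> {0<..<1}"
      then have "g 0 \<le> g t" using mono unfolding mono_on_def by auto
      then have "(1 - t) * g 0 \<le> (1 - t) * g t" using t by (intro mult_left_mono) auto
      then show "(1 - t) * g 0 \<le> 1 - R" using bound[OF t] by linarith
    qed simp
    ultimately show ?thesis
      using 1 by (intro tendsto_upperbound) auto
  qed (use R bound in auto)
qed

lemma mul_penalty_add_one_minus_ge:
  fixes g :: "real \<Rightarrow> real"
  assumes R: "R \<le> 1"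
    and lower: "\<forall>t\<in>{0<..<1}. 1 - (1 - R) / t \<le> g t" and g_one: "R \<le> g 1"
    and x: "x \<in> {0..1}"
  shows "R \<le> x * g x + (1 - x)"
proof -
  consider "x = 0" | "x = 1" | "x \<in> {0<..<1}" using x by fastforce
  then show ?thesis
  proof cases
    case 3
    then show ?thesis using lower by (auto simp: field_simps)
  qed (use R g_one in auto)
qed

lemma robustness_charging:
  fixes R :: real and w u :: "'s \<Rightarrow> real"
  assumes R: "R \<le> 1" and fin: "finite S"
    and J: "J1 \<subseteq> S" "J2 \<subseteq> S" "J1 \<inter> J2 = {}"
    and w: "\<forall>j\<in>S. 0 \<le> w j"
    and f_nonneg: "\<forall>j\<in>S. \<forall>t\<in>{0..1}. 0 \<le> f j t"
    and f_mono: "\<forall>j\<in>S. mono_on {0..1} (f j)"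
    and f_bounds: "\<forall>j\<in>S. \<forall>t\<in>{0<..<1}.
                     1 - (1 - R) / t \<le> f j t \<and> f j t \<le> (1 - R) / (1 - t)"
    and f_one: "\<forall>j\<in>S. R \<le> f j 1"
    and u: "\<forall>j\<in>S. u j \<in> {0..1}"
  shows "R * (\<Sum>j\<in>J1 \<union> J2. w j)
           \<le> (\<Sum>j\<in>J1. w j * (1 - f j (u j))) + (\<Sum>j\<in>J2. w j * (1 - u j))
              + (\<Sum>j\<in>S. w j * u j * f j (u j))"
proof -
  define a where "a j = w j * u j * f j (u j)" for j
  have finJ: "finite J1" "finite J2"
    using finite_subset[OF J(1) fin] finite_subset[OF J(2) fin] .
  have J1_charge: "R * w j \<le> w j * (1 - f j (u j)) + a j" if "j \<in> J1" for j
  proof -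
    have j: "j \<in> S" using J(1) that by auto
    have "(1 - u j) * f j (u j) \<le> 1 - R"
      using R f_mono f_bounds u j by (intro one_minus_mul_penalty_le[of R "f j"]) auto
    then have "w j * R \<le> w j * ((1 - f j (u j)) + u j * f j (u j))"
      using w j by (intro mult_left_mono) (auto simp: algebra_simps)
    then show ?thesis unfolding a_def by (simp add: algebra_simps)
  qed
  have J2_charge: "R * w j \<le> w j * (1 - u j) + a j" if "j \<in> J2" for j
  proof -
    have j: "j \<in> S" using J(2) that by auto
    have "R \<le> u j * f j (u j) + (1 - u j)"
      using R f_bounds f_one u j by (intro mul_penalty_add_one_minus_ge[of R "f j"]) auto
    then have "w j * R \<le> w j * (u j * f j (u j) + (1 - u j))"
      using w j by (intro mult_left_mono) auto
    then show ?thesis unfolding a_def by (simp add: algebra_simps)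
  qed
  have "(\<Sum>j\<in>J1 \<union> J2. a j) \<le> (\<Sum>j\<in>S. a j)"
    using fin J w f_nonneg u unfolding a_def by (intro sum_mono2) auto
  then have "(\<Sum>j\<in>J1. a j) + (\<Sum>j\<in>J2. a j) \<le> (\<Sum>j\<in>S. a j)"
    using sum.union_disjoint[OF finJ J(3), of a] by simp
  moreover have "R * (\<Sum>j\<in>J1 \<union> J2. w j) = (\<Sum>j\<in>J1. R * w j) + (\<Sum>j\<in>J2. R * w j)"
    using sum.union_disjoint[OF finJ J(3)] by (simp add: sum_distrib_left)
  moreover have "(\<Sum>j\<in>J1. R * w j) \<le> (\<Sum>j\<in>J1. w j * (1 - f j (u j))) + (\<Sum>j\<in>J1. a j)"
    using J1_charge by (simp add: sum.distrib[symmetric] sum_mono)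
  moreover have "(\<Sum>j\<in>J2. R * w j) \<le> (\<Sum>j\<in>J2. w j * (1 - u j)) + (\<Sum>j\<in>J2. a j)"
    using J2_charge by (simp add: sum.distrib[symmetric] sum_mono)
  ultimately show ?thesis unfolding a_def by linarith
qed

theorem theorem1:
  fixes D1 D2 :: "'d set" and S :: "'s set" and E1 E2 A :: "('d \<times> 's) set"
    and w :: "'s \<Rightarrow> real" and f :: "'s \<Rightarrow> real \<Rightarrow> real" and R :: real
    and xbar ybar :: "'d \<times> 's \<Rightarrow> real"
  assumes R: "0 \<le> R" "R \<le> 3/4"
    and fin: "finite D1" "finite D2" "finite S"
    and disj: "D1 \<inter> D2 = {}"
    and E1: "E1 \<subseteq> D1 \<times> S" and E2: "E2 \<subseteq> D2 \<times> S"
    and w: "\<forall>j\<in>S. 0 \<le> w j"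
    and A: "A \<subseteq> E1" "is_matching A"
    and f_range: "\<forall>j\<in>S. \<forall>x\<in>{0..1}. 0 \<le> f j x \<and> f j x \<le> 1"
    and f_cont: "\<forall>j\<in>S. continuous_on {0..1} (f j)"
    and f_mono: "\<forall>j\<in>S. mono_on {0..1} (f j)"
    and f_bounds: "\<forall>j\<in>S. \<forall>x\<in>{0<..<1}.
                     1 - (1 - R) / x \<le> f j x \<and> f j x \<le> (1 - R) / (1 - x)"
    and f_one: "\<forall>j\<in>S. R \<le> f j 1"
    and opt1: "optimal1 D1 S w f E1 xbar"
    and opt2: "optimal2 D2 S w E2 (load_off E1 xbar) ybar"
  shows "ALG S w E1 E2 xbar ybar \<ge> R * OPT w (E1 \<union> E2)"
proof -
  have finE: "finite E1" "finite E2"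
    using finite_subset[OF E1] finite_subset[OF E2] fin by auto
  then have "finite (E1 \<union> E2)" by simp
  then obtain M where M: "M \<subseteq> E1 \<union> E2" "is_matching M" "OPT w (E1 \<union> E2) = (\<Sum>j\<in>snd ` M. w j)"
    by (rule OPT_attained)
  define u where "u = load_off E1 xbar"
  define J1 where "J1 = snd ` (M \<inter> E1)"
  define J2 where "J2 = snd ` (M \<inter> E2)"
  have u: "\<forall>j\<in>S. u j \<in> {0..1}"
    using opt1 feasible1_load_off[of D1 S E1 xbar] unfolding optimal1_def u_def by simp
  have J: "J1 \<subseteq> S" "J2 \<subseteq> S" "J1 \<inter> J2 = {}" "snd ` M = J1 \<union> J2"
    unfolding J1_def J2_def by (rule matching_split_stages[OF M(2,1) E1 E2 disj])+
  have M12: "is_matching (M \<inter> E1)" "is_matching (M \<inter> E2)"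
    using is_matching_subset[OF M(2)] by auto
  have stage1: "(\<Sum>j\<in>J1. w j * (1 - f j (u j))) \<le> (\<Sum>j\<in>S. w j * (1 - f j (u j)) * u j)"
    using optimal1_matching_bound[OF opt1 fin(3) finE(1) Int_lower2 M12(1)] J(1) w f_mono f_cont
    unfolding J1_def u_def by blast
  have stage2: "(\<Sum>j\<in>J2. w j * (1 - u j)) \<le> obj2 S w E2 ybar"
    using optimal2_matching_bound[OF opt2[folded u_def] fin(3) finE(2) Int_lower2 M12(2)] J(2) u
    unfolding J2_def by blast
  have "R * (\<Sum>j\<in>J1 \<union> J2. w j) \<le> (\<Sum>j\<in>J1. w j * (1 - f j (u j)))
      + (\<Sum>j\<in>J2. w j * (1 - u j)) + (\<Sum>j\<in>S. w j * u j * f j (u j))"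
    using R f_range by (intro robustness_charging[OF _ fin(3) J(1-3) w _ f_mono f_bounds f_one u]) auto
  moreover have "ALG S w E1 E2 xbar ybar
      = (\<Sum>j\<in>S. w j * (1 - f j (u j)) * u j) + (\<Sum>j\<in>S. w j * u j * f j (u j)) + obj2 S w E2 ybar"
    unfolding ALG_def obj2_def u_def by (simp add: sum.distrib[symmetric] algebra_simps)
  ultimately show ?thesis
    unfolding M(3) J(4) using stage1 stage2 by linarith
qed

end
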